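(* Let $\Gamma$ be a group and $S$ a $\Gamma$-graded inverse semigroup. Then there exist a nonempty set $X$ with a map $\deg:X\to\Gamma$ and an injective semigroup homomorphism $\psi:S\to\mathcal{I}^{\mathrm{gr}}(X)$ with $\psi(S_\alpha)\subseteq\mathcal{I}(X)_\alpha$ for all $\alpha\in\Gamma$.
   Context: Semigroups have a zero; $S$ is $\Gamma$-graded via $\deg:S\setminus\{0\}\to\Gamma$ with $\deg(st)=\deg(s)\deg(t)$ when $st\neq0$, $S_\alpha=\deg^{-1}(\alpha)\cup\{0\}$. For a set $X$, $\mathcal I(X)$ is the symmetric inverse monoid: bijections $\phi:A\to B$ between subsets of $X$, with $\mathrm{Dom}(\phi)=A$, composed as partial maps (the composite $\phi\psi$ has domain $\psi^{-1}(\mathrm{Im}\,\psi\cap\mathrm{Dom}\,\phi)$), with the empty map as zero. For $X$ with $\deg:X\to\Gamma$ put $X_\alpha=\deg^{-1}(\alpha)$ and, for $A\subseteq X$, $A_\alpha=A\cap X_\alpha$. Define $\mathcal I(X)_\alpha=\{\phi\in\mathcal I(X):\phi(\mathrm{Dom}(\phi)_\beta)\subseteq X_{\alpha\beta}\text{ for all }\beta\in\Gamma\}$ and $\mathcal I^{\mathrm{gr}}(X)=\bigcup_{\alpha\in\Gamma}\mathcal I(X)_\alpha$; this is a $\Gamma$-graded inverse subsemigroup of $\mathcal I(X)$ with components $\mathcal I(X)_\alpha$. *)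

theory Defs
  imports "HOL-Algebra.Group"
begin

definition semigroup_zero :: "'a set \<Rightarrow> ('a \<Rightarrow> 'a \<Rightarrow> 'a) \<Rightarrow> 'a \<Rightarrow> bool" where
  "semigroup_zero S m z \<longleftrightarrow>
     (\<forall>s\<in>S. \<forall>t\<in>S. m s t \<in> S) \<and>
     (\<forall>s\<in>S. \<forall>t\<in>S. \<forall>u\<in>S. m (m s t) u = m s (m t u)) \<and>
     z \<in> S \<and> (\<forall>s\<in>S. m z s = z \<and> m s z = z)"

definition inverse_semigroup :: "'a set \<Rightarrow> ('a \<Rightarrow> 'a \<Rightarrow> 'a) \<Rightarrow> 'a \<Rightarrow> bool" where
  "inverse_semigroup S m z \<longleftrightarrow> semigroup_zero S m z \<and>
     (\<forall>s\<in>S. \<exists>!t. t \<in> S \<and> m (m s t) s = s \<and> m (m t s) t = t)"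

definition graded :: "('g, 'b) monoid_scheme \<Rightarrow> 'a set \<Rightarrow> ('a \<Rightarrow> 'a \<Rightarrow> 'a) \<Rightarrow> 'a \<Rightarrow> ('a \<Rightarrow> 'g) \<Rightarrow> bool" where
  "graded G S m z deg \<longleftrightarrow>
     (\<forall>s\<in>S - {z}. deg s \<in> carrier G) \<and>
     (\<forall>s\<in>S. \<forall>t\<in>S. m s t \<noteq> z \<longrightarrow> deg (m s t) = deg s \<otimes>\<^bsub>G\<^esub> deg t)"

definition hcomp :: "'a set \<Rightarrow> 'a \<Rightarrow> ('a \<Rightarrow> 'g) \<Rightarrow> 'g \<Rightarrow> 'a set" where
  "hcomp S z deg \<alpha> = {s \<in> S - {z}. deg s = \<alpha>} \<union> {z}"

text \<open>Symmetric inverse monoid I(X): partial bijections between subsets of X, as partial maps.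
  Composition is map_comp (map_comp), the zero is the empty map.\<close>
definition sym_inv :: "'x set \<Rightarrow> ('x \<rightharpoonup> 'x) set" where
  "sym_inv X = {\<phi>. dom \<phi> \<subseteq> X \<and> ran \<phi> \<subseteq> X \<and> inj_on \<phi> (dom \<phi>)}"

definition sym_inv_comp :: "('g, 'b) monoid_scheme \<Rightarrow> 'x set \<Rightarrow> ('x \<Rightarrow> 'g) \<Rightarrow> 'g \<Rightarrow> ('x \<rightharpoonup> 'x) set" where
  "sym_inv_comp G X degX \<alpha> = {\<phi> \<in> sym_inv X.
     \<forall>\<beta>\<in>carrier G. \<forall>x\<in>dom \<phi>. degX x = \<beta> \<longrightarrow>
        (\<forall>y. \<phi> x = Some y \<longrightarrow> y \<in> X \<and> degX y = \<alpha> \<otimes>\<^bsub>G\<^esub> \<beta>)}"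

definition sym_inv_gr :: "('g, 'b) monoid_scheme \<Rightarrow> 'x set \<Rightarrow> ('x \<Rightarrow> 'g) \<Rightarrow> ('x \<rightharpoonup> 'x) set" where
  "sym_inv_gr G X degX = (\<Union>\<alpha>\<in>carrier G. sym_inv_comp G X degX \<alpha>)"

end

theory Submission
  imports Defs
begin

text \<open>This is the Wagner--Preston representation, adapted to the zero and the grading. An element
  \<open>s\<close> acts on \<open>S - {0}\<close> by left multiplication, restricted to the nonzero elements of the
  principal right ideal \<open>s\<inverse>s S\<close>; there it is a bijection onto the nonzero part of \<open>s s\<inverse> S\<close>
  with inverse \<open>x \<mapsto> s\<inverse>x\<close>. Commutation of idempotents makes this a homomorphism, evaluation
  at \<open>s\<inverse>s\<close> recovers \<open>s\<close>, and grading \<open>X = S\<close> by \<open>deg\<close> itself makes left multiplication by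
  \<open>s\<close> homogeneous of degree \<open>deg s\<close>.\<close>

lemma empty_in_sym_inv_comp [simp]: "Map.empty \<in> sym_inv_comp G X degX \<alpha>"
  by (auto simp: sym_inv_comp_def sym_inv_def)

locale inv_semigroup =
  fixes S :: "'a set" and mult :: "'a \<Rightarrow> 'a \<Rightarrow> 'a" (infixl "\<cdot>" 70)
  assumes mult_closed [simp]: "a \<in> S \<Longrightarrow> b \<in> S \<Longrightarrow> a \<cdot> b \<in> S"
    and mult_assoc [simp]: "a \<in> S \<Longrightarrow> b \<in> S \<Longrightarrow> c \<in> S \<Longrightarrow> a \<cdot> b \<cdot> c = a \<cdot> (b \<cdot> c)"
    and unique_inverse: "a \<in> S \<Longrightarrow> \<exists>!b. b \<in> S \<and> a \<cdot> b \<cdot> a = a \<and> b \<cdot> a \<cdot> b = b"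
begin

definition sinv :: "'a \<Rightarrow> 'a" where
  "sinv a = (THE b. b \<in> S \<and> a \<cdot> b \<cdot> a = a \<and> b \<cdot> a \<cdot> b = b)"

lemma sinv_inverse:
  assumes "a \<in> S"
  shows "sinv a \<in> S" "a \<cdot> sinv a \<cdot> a = a" "sinv a \<cdot> a \<cdot> sinv a = sinv a"
  using theI'[OF unique_inverse[OF assms]] unfolding sinv_def by auto

lemma sinv_closed [simp]: "a \<in> S \<Longrightarrow> sinv a \<in> S"
  by (rule sinv_inverse)

lemma mult_sinv_mult [simp]: "a \<in> S \<Longrightarrow> a \<cdot> (sinv a \<cdot> a) = a"
  using sinv_inverse(2) by simp

lemma mult_sinv_mult_left [simp]: "a \<in> S \<Longrightarrow> w \<in> S \<Longrightarrow> a \<cdot> (sinv a \<cdot> (a \<cdot> w)) = a \<cdot> w"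
  by (metis mult_assoc mult_closed mult_sinv_mult sinv_closed)

lemma sinv_mult_sinv [simp]: "a \<in> S \<Longrightarrow> sinv a \<cdot> (a \<cdot> sinv a) = sinv a"
  using sinv_inverse(3) by simp

lemma sinv_mult_sinv_left [simp]:
  "a \<in> S \<Longrightarrow> w \<in> S \<Longrightarrow> sinv a \<cdot> (a \<cdot> (sinv a \<cdot> w)) = sinv a \<cdot> w"
  by (metis mult_assoc mult_closed sinv_mult_sinv sinv_closed)

lemma sinv_eqI:
  assumes "a \<in> S" "b \<in> S" "a \<cdot> b \<cdot> a = a" "b \<cdot> a \<cdot> b = b"
  shows "sinv a = b"
  using unique_inverse[OF assms(1)] sinv_inverse[OF assms(1)] assms(2-) by blast

lemma sinv_idem: "e \<in> S \<Longrightarrow> e \<cdot> e = e \<Longrightarrow> sinv e = e"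
  by (rule sinv_eqI) simp_all

lemma idem_mult_idem:
  assumes e: "e \<in> S" "e \<cdot> e = e" and f: "f \<in> S" "f \<cdot> f = f"
  shows "e \<cdot> f \<cdot> (e \<cdot> f) = e \<cdot> f"
proof -
  define x where "x = sinv (e \<cdot> f)"
  have x: "x \<in> S" "e \<cdot> f \<cdot> x \<cdot> (e \<cdot> f) = e \<cdot> f" "x \<cdot> (e \<cdot> f) \<cdot> x = x"
    using sinv_inverse[of "e \<cdot> f"] e f by (simp_all add: x_def)
  have ee: "e \<cdot> (e \<cdot> w) = e \<cdot> w" and ff: "f \<cdot> (f \<cdot> w) = f \<cdot> w"
    and xefx: "x \<cdot> (e \<cdot> (f \<cdot> (x \<cdot> w))) = x \<cdot> w" if "w \<in> S" for w
    using e f x that by (metis mult_assoc mult_closed)+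
  \<comment> \<open>\<open>f x e\<close> is another inverse of \<open>e f\<close>, so \<open>x = f x e\<close>, which makes \<open>x\<close> idempotent\<close>
  have "sinv (e \<cdot> f) = f \<cdot> x \<cdot> e"
    by (rule sinv_eqI) (use e f x in \<open>simp_all add: ee ff xefx\<close>)
  then have fxe: "f \<cdot> (x \<cdot> e) = x"
    using e f x by (simp add: x_def)
  have "x \<cdot> x = x"
    using x(3) e f x(1) by (metis fxe mult_assoc mult_closed ee ff)
  then have "sinv x = x"
    using x(1) by (simp add: sinv_idem)
  moreover have "sinv x = e \<cdot> f"
    by (rule sinv_eqI) (use e f x in simp_all)
  ultimately show ?thesis
    using \<open>x \<cdot> x = x\<close> by simp
qed

lemma idem_commute:
  assumes e: "e \<in> S" "e \<cdot> e = e" and f: "f \<in> S" "f \<cdot> f = f"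
  shows "e \<cdot> f = f \<cdot> e"
proof -
  have ef: "e \<cdot> f \<cdot> (e \<cdot> f) = e \<cdot> f" and fe: "f \<cdot> e \<cdot> (f \<cdot> e) = f \<cdot> e"
    using idem_mult_idem e f by blast+
  have "sinv (e \<cdot> f) = e \<cdot> f"
    using e f ef by (simp add: sinv_idem)
  moreover have "sinv (e \<cdot> f) = f \<cdot> e"
  proof (rule sinv_eqI)
    show "e \<cdot> f \<cdot> (f \<cdot> e) \<cdot> (e \<cdot> f) = e \<cdot> f"
      using e f ef by (metis mult_assoc mult_closed)
    show "f \<cdot> e \<cdot> (e \<cdot> f) \<cdot> (f \<cdot> e) = f \<cdot> e"
      using e f fe by (metis mult_assoc mult_closed)
  qed (use e f in simp_all)
  ultimately show ?thesis by simp
qed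

lemma sinv_mult_sinv_commute:
  assumes "a \<in> S" "b \<in> S" "w \<in> S"
  shows "sinv a \<cdot> (a \<cdot> (b \<cdot> (sinv b \<cdot> w))) = b \<cdot> (sinv b \<cdot> (sinv a \<cdot> (a \<cdot> w)))"
proof -
  have "sinv a \<cdot> a \<cdot> (b \<cdot> sinv b) = b \<cdot> sinv b \<cdot> (sinv a \<cdot> a)"
    by (rule idem_commute) (use assms in simp_all)
  then have "sinv a \<cdot> a \<cdot> (b \<cdot> sinv b) \<cdot> w = b \<cdot> sinv b \<cdot> (sinv a \<cdot> a) \<cdot> w"
    by simp
  then show ?thesis
    using assms by simp
qed

lemma sinv_mult:
  assumes "a \<in> S" "b \<in> S"
  shows "sinv (a \<cdot> b) = sinv b \<cdot> sinv a"
proof (rule sinv_eqI)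
  show "a \<cdot> b \<cdot> (sinv b \<cdot> sinv a) \<cdot> (a \<cdot> b) = a \<cdot> b"
    using assms sinv_mult_sinv_commute[of a b b, symmetric] by simp
  show "sinv b \<cdot> sinv a \<cdot> (a \<cdot> b) \<cdot> (sinv b \<cdot> sinv a) = sinv b \<cdot> sinv a"
    using assms sinv_mult_sinv_commute[of a b "sinv a"] by simp
qed (use assms in simp_all)

end

locale inv_semigroup_zero = inv_semigroup +
  fixes zero :: 'a
  assumes zero_closed [simp]: "zero \<in> S"
    and mult_zero_left [simp]: "a \<in> S \<Longrightarrow> zero \<cdot> a = zero"
    and mult_zero_right [simp]: "a \<in> S \<Longrightarrow> a \<cdot> zero = zero"
begin

lemma sinv_mult_nonzero: "a \<in> S \<Longrightarrow> a \<noteq> zero \<Longrightarrow> sinv a \<cdot> a \<noteq> zero"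
  by (metis mult_sinv_mult mult_zero_right sinv_closed mult_closed)

text \<open>Leaving \<open>zero\<close> out of every domain makes \<open>wagner_preston zero\<close> the empty map, the zero of
  \<open>\<I>(X)\<close>; otherwise it would be the identity on \<open>{zero}\<close>.\<close>

definition wagner_preston :: "'a \<Rightarrow> ('a \<rightharpoonup> 'a)" where
  "wagner_preston s =
     (\<lambda>x. if x \<in> S \<and> x \<noteq> zero \<and> sinv s \<cdot> (s \<cdot> x) = x then Some (s \<cdot> x) else None)"

lemma wagner_preston_Some_iff:
  "wagner_preston s x = Some y \<longleftrightarrow> x \<in> S \<and> x \<noteq> zero \<and> sinv s \<cdot> (s \<cdot> x) = x \<and> y = s \<cdot> x"
  by (auto simp: wagner_preston_def)

lemma wagner_preston_zero: "wagner_preston zero = Map.empty"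
  by (auto simp: wagner_preston_def)

lemma wagner_preston_sinv_mult:
  "s \<in> S \<Longrightarrow> s \<noteq> zero \<Longrightarrow> wagner_preston s (sinv s \<cdot> s) = Some s"
  by (simp add: wagner_preston_Some_iff sinv_mult_nonzero)

lemma wagner_preston_image:
  assumes "s \<in> S" "wagner_preston s x = Some y"
  shows "y \<in> S" "y \<noteq> zero"
proof -
  have x: "x \<in> S" "x \<noteq> zero" "sinv s \<cdot> (s \<cdot> x) = x" "y = s \<cdot> x"
    using assms(2) by (auto simp: wagner_preston_Some_iff)
  then show "y \<in> S"
    using assms(1) by simp
  show "y \<noteq> zero"
    using x assms(1) by (metis mult_zero_right sinv_closed)
qed

lemma wagner_preston_in_sym_inv:
  assumes "s \<in> S"
  shows "wagner_preston s \<in> sym_inv S"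
proof -
  have "inj_on (wagner_preston s) (dom (wagner_preston s))"
    by (rule inj_onI) (auto simp: wagner_preston_def split: if_splits)
  moreover have "ran (wagner_preston s) \<subseteq> S"
    using wagner_preston_image(1)[OF assms] by (auto simp: ran_def)
  ultimately show ?thesis
    by (auto simp: sym_inv_def wagner_preston_def split: if_splits)
qed

lemma wagner_preston_mult_dom:
  assumes s: "s \<in> S" and t: "t \<in> S" and x: "x \<in> S" "x \<noteq> zero"
  shows "sinv t \<cdot> (sinv s \<cdot> (s \<cdot> (t \<cdot> x))) = x \<longleftrightarrow>
    sinv t \<cdot> (t \<cdot> x) = x \<and> t \<cdot> x \<noteq> zero \<and> sinv s \<cdot> (s \<cdot> (t \<cdot> x)) = t \<cdot> x"
proof
  assume h: "sinv t \<cdot> (sinv s \<cdot> (s \<cdot> (t \<cdot> x))) = x"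
  have "sinv t \<cdot> (t \<cdot> x) = sinv t \<cdot> (t \<cdot> (sinv t \<cdot> (sinv s \<cdot> (s \<cdot> (t \<cdot> x)))))"
    by (simp only: h)
  also have "\<dots> = sinv t \<cdot> (sinv s \<cdot> (s \<cdot> (t \<cdot> x)))"
    using s t x by simp
  also have "\<dots> = x"
    by (rule h)
  finally have "sinv t \<cdot> (t \<cdot> x) = x" .
  moreover have "t \<cdot> x \<noteq> zero"
  proof
    assume "t \<cdot> x = zero"
    with h s t x(2) show False by simp
  qed
  moreover have "t \<cdot> x = sinv s \<cdot> (s \<cdot> (t \<cdot> x))"
  proof -
    have "t \<cdot> x = t \<cdot> (sinv t \<cdot> (sinv s \<cdot> (s \<cdot> (t \<cdot> x))))"
      by (simp only: h)
    also have "\<dots> = sinv s \<cdot> (s \<cdot> (t \<cdot> (sinv t \<cdot> (t \<cdot> x))))"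
      by (rule sinv_mult_sinv_commute[symmetric]) (use s t x in simp_all)
    finally show ?thesis
      using s t x by simp
  qed
  ultimately show "sinv t \<cdot> (t \<cdot> x) = x \<and> t \<cdot> x \<noteq> zero \<and> sinv s \<cdot> (s \<cdot> (t \<cdot> x)) = t \<cdot> x"
    by simp
qed simp

lemma wagner_preston_mult:
  assumes "s \<in> S" "t \<in> S"
  shows "wagner_preston (s \<cdot> t) = wagner_preston s \<circ>\<^sub>m wagner_preston t"
proof
  fix x
  show "wagner_preston (s \<cdot> t) x = (wagner_preston s \<circ>\<^sub>m wagner_preston t) x"
  proof (cases "x \<in> S \<and> x \<noteq> zero")
    case True
    then show ?thesis
      using wagner_preston_mult_dom[OF assms] assms
      by (auto simp: wagner_preston_def map_comp_def sinv_mult)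
  qed (auto simp: wagner_preston_def map_comp_def)
qed

lemma wagner_preston_eq_nonzero:
  assumes s: "s \<in> S" "s \<noteq> zero" and t: "t \<in> S"
    and eq: "wagner_preston s = wagner_preston t"
  shows "t \<noteq> zero" "t \<cdot> (sinv s \<cdot> s) = s" "sinv t \<cdot> (t \<cdot> (sinv s \<cdot> s)) = sinv s \<cdot> s"
proof -
  have "wagner_preston t (sinv s \<cdot> s) = Some s"
    using wagner_preston_sinv_mult[OF s] eq by simp
  then show "t \<cdot> (sinv s \<cdot> s) = s" "sinv t \<cdot> (t \<cdot> (sinv s \<cdot> s)) = sinv s \<cdot> s" "t \<noteq> zero"
    by (auto simp: wagner_preston_Some_iff wagner_preston_zero)
qed

lemma inj_on_wagner_preston: "inj_on wagner_preston S"
proof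
  fix s t
  assume s: "s \<in> S" and t: "t \<in> S" and eq: "wagner_preston s = wagner_preston t"
  show "s = t"
  proof (cases "s = zero")
    case True
    then show ?thesis
      using wagner_preston_eq_nonzero(1)[OF t _ s eq[symmetric]] by blast
  next
    case False
    note st = wagner_preston_eq_nonzero[OF s False t eq]
    note ts = wagner_preston_eq_nonzero[OF t st(1) s eq[symmetric]]
    \<comment> \<open>the idempotents \<open>s\<inverse>s\<close> and \<open>t\<inverse>t\<close> absorb each other, hence coincide\<close>
    have "sinv s \<cdot> s = sinv t \<cdot> t \<cdot> (sinv s \<cdot> s)"
      using st(3) s t by simp
    also have "\<dots> = sinv s \<cdot> s \<cdot> (sinv t \<cdot> t)"
      by (rule idem_commute) (use s t in simp_all)
    also have "\<dots> = sinv t \<cdot> t"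
      using ts(3) s t by simp
    finally have "sinv s \<cdot> s = sinv t \<cdot> t" .
    then show "s = t"
      using st(2) t by simp
  qed
qed

context
  fixes G :: "('g, 'b) monoid_scheme" and deg degX :: "'a \<Rightarrow> 'g"
  assumes graded: "graded G S (\<cdot>) zero deg"
    and degX: "\<And>x. x \<in> S \<Longrightarrow> x \<noteq> zero \<Longrightarrow> degX x = deg x"
begin

lemma wagner_preston_in_sym_inv_comp:
  assumes "s \<in> S" "s \<noteq> zero"
  shows "wagner_preston s \<in> sym_inv_comp G S degX (deg s)"
proof -
  have "degX y = deg s \<otimes>\<^bsub>G\<^esub> degX x" if "wagner_preston s x = Some y" for x y
  proof -
    have "x \<in> S" "x \<noteq> zero" "y = s \<cdot> x"
      using that by (auto simp: wagner_preston_Some_iff)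
    then show ?thesis
      using assms graded degX wagner_preston_image[OF assms(1) that] by (auto simp: graded_def)
  qed
  then show ?thesis
    using wagner_preston_in_sym_inv[OF assms(1)] wagner_preston_image(1)[OF assms(1)]
    by (auto simp: sym_inv_comp_def)
qed

lemma wagner_preston_hcomp_subset:
  "wagner_preston ` hcomp S zero deg \<alpha> \<subseteq> sym_inv_comp G S degX \<alpha>"
  using wagner_preston_in_sym_inv_comp by (auto simp: hcomp_def wagner_preston_zero)

lemma wagner_preston_in_sym_inv_gr:
  assumes "carrier G \<noteq> {}" "s \<in> S"
  shows "wagner_preston s \<in> sym_inv_gr G S degX"
proof (cases "s = zero")
  case True
  then show ?thesis
    using assms(1) by (auto simp: sym_inv_gr_def wagner_preston_zero)
next
  case False
  then show ?thesis
    using assms(2) graded wagner_preston_in_sym_inv_comp by (auto simp: sym_inv_gr_def graded_def)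
qed

end

end

lemma inverse_semigroup_imp_inv_semigroup_zero:
  "inverse_semigroup S m z \<Longrightarrow> inv_semigroup_zero S m z"
  unfolding inverse_semigroup_def semigroup_zero_def
  by unfold_locales auto

theorem proposition5p4:
  fixes G :: "('g, 'b) monoid_scheme"
    and S :: "'a set" and m :: "'a \<Rightarrow> 'a \<Rightarrow> 'a" and z :: 'a and deg :: "'a \<Rightarrow> 'g"
  assumes "group G"
    and "inverse_semigroup S m z"
    and "graded G S m z deg"
  shows "\<exists>(X :: 'a set) (degX :: 'a \<Rightarrow> 'g) (\<psi> :: 'a \<Rightarrow> ('a \<rightharpoonup> 'a)).
           X \<noteq> {} \<and> (\<forall>x\<in>X. degX x \<in> carrier G) \<and>
           (\<forall>s\<in>S. \<psi> s \<in> sym_inv_gr G X degX) \<and>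
           inj_on \<psi> S \<and>
           (\<forall>s\<in>S. \<forall>t\<in>S. \<psi> (m s t) = \<psi> s \<circ>\<^sub>m \<psi> t) \<and>
           (\<forall>\<alpha>\<in>carrier G. \<psi> ` hcomp S z deg \<alpha> \<subseteq> sym_inv_comp G X degX \<alpha>)"
proof -
  interpret inv_semigroup_zero S m z
    using assms(2) by (rule inverse_semigroup_imp_inv_semigroup_zero)
  \<comment> \<open>\<open>z\<close> lies in no domain, so its degree only has to lie in \<open>carrier G\<close>\<close>
  define degX where "degX x = (if x = z then \<one>\<^bsub>G\<^esub> else deg x)" for x
  have one: "\<one>\<^bsub>G\<^esub> \<in> carrier G"
    using assms(1) by (simp add: group.is_monoid monoid.one_closed)
  have degX: "\<And>x. x \<in> S \<Longrightarrow> x \<noteq> z \<Longrightarrow> degX x = deg x"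
    by (simp add: degX_def)
  show ?thesis
  proof (intro exI conjI)
    show "S \<noteq> {}"
      using zero_closed by blast
    show "\<forall>x\<in>S. degX x \<in> carrier G"
      using assms(3) one by (auto simp: degX_def graded_def)
    show "\<forall>s\<in>S. wagner_preston s \<in> sym_inv_gr G S degX"
      using wagner_preston_in_sym_inv_gr[OF assms(3) degX] one by blast
    show "\<forall>\<alpha>\<in>carrier G. wagner_preston ` hcomp S z deg \<alpha> \<subseteq> sym_inv_comp G S degX \<alpha>"
      using wagner_preston_hcomp_subset[OF assms(3) degX] by blast
  qed (use inj_on_wagner_preston wagner_preston_mult in auto)
qed

end
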